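(* Over $\operatorname{Spec}(\mathbb Z[1/2])$ there is an isomorphism of representations of $G$ \[ \rho_4\cong 1\oplus\chi\oplus\rho_2 \] such that the projection to the first summand $1$ (the trivial one-dimensional representation) is the trace homomorphism $\rho_4\to 1$.
   Context: Work with group schemes over $\operatorname{Spec}(\mathbb Z)$. Let $H\subset GL_2$ be the subgroup scheme of invertible matrices that are either diagonal or antidiagonal, and $N:H\to\mathbb G_m$ the homomorphism given by the product of the two nonzero entries. Let $G=\ker N$; its points are the matrices $\mathrm{diag}(\alpha,\alpha^{-1})$ and $\begin{pmatrix}0&\beta\\ \beta^{-1}&0\end{pmatrix}$. Let $\rho_2$ be the tautological $2$-dimensional representation of $G\subset GL_2$. The map $q:G\to G$ squaring each matrix entry is a surjective homomorphism with kernel $\mu_2=\{\pm I\}$. The representations $\det(\rho_2)$ and $\rho_2^\vee\otimes\rho_2$ of the source $G$ of $q$ are trivial on $\mu_2$, hence factor through $q$ and define linear representations $\chi$ and $\rho_4$ of the target $G$; the trace $\rho_2^\vee\otimes\rho_2\to 1$ induces the trace homomorphism $\rho_4\to1$. In the claimed isomorphism, $\rho_2$ denotes the tautological representation of the target $G$. *)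

theory Defs
  imports "Jordan_Normal_Form.Determinant"
begin

text \<open>Group schemes are treated through their functor of points on commutative rings
('r :: comm_ring_1).  Matrices are Jordan_Normal_Form matrices.\<close>

definition G_points :: "'r::comm_ring_1 mat set" where
  "G_points =
     {mat_of_rows_list 2 [[a, 0], [0, a']] | a a'. a * a' = 1} \<union>
     {mat_of_rows_list 2 [[0, b], [b', 0]] | b b'. b * b' = 1}"

definition q_sq :: "'r::comm_ring_1 mat \<Rightarrow> 'r mat" where
  "q_sq h = map_mat (\<lambda>x. x ^ 2) h"

definition rho2 :: "'r::comm_ring_1 mat \<Rightarrow> 'r mat" where
  "rho2 g = g"

text \<open>Character chi on the target G: the descent of det(rho_2) along q.
  For g = q(h) one has chi(g) = det h, which equals det g (both are 1 on the
  diagonal component and -1 on the antidiagonal one).\<close>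
definition chi :: "'r::comm_ring_1 mat \<Rightarrow> 'r mat" where
  "chi g = mat_of_rows_list 1 [[det g]]"

text \<open>rho_4 on the target G: the descent of rho_2^dual tensor rho_2 = End(V) (action
  X |-> h X h^-1) along q, written in the basis E11, E12, E21, E22 of End(V).
  For g = q(h) this is exactly the matrix of X |-> h X h^-1.\<close>
definition rho4 :: "'r::comm_ring_1 mat \<Rightarrow> 'r mat" where
  "rho4 g = (let x = g $$ (0,0); y = g $$ (0,1); z = g $$ (1,0); w = g $$ (1,1) in
     mat_of_rows_list 4
       [[x*w, 0, 0, y*z],
        [0,   x, y, 0],
        [0,   z, w, 0],
        [y*z, 0, 0, x*w]])"

definition dsum :: "'r::comm_ring_1 mat \<Rightarrow> 'r mat \<Rightarrow> 'r mat" where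
  "dsum A B = four_block_mat A (0\<^sub>m (dim_row A) (dim_col B)) (0\<^sub>m (dim_row B) (dim_col A)) B"

definition triv_chi_rho2 :: "'r::comm_ring_1 mat \<Rightarrow> 'r mat" where
  "triv_chi_rho2 g = dsum (1\<^sub>m 1) (dsum (chi g) (rho2 g))"

definition trace_vec :: "int vec" where
  "trace_vec = vec_of_list [1, 0, 0, 1]"

end

theory Submission
  imports Defs
begin

text \<open>In the coordinates X11, X12, X21, X22 of End(V), the linear map
  X \<mapsto> (tr X, X11 - X22, X12, X21) intertwines rho4 with 1 + chi + rho2: for g = q(h),
  conjugation by h fixes the identity, multiplies E11 - E22 by det h (it is fixed by the
  diagonal component and negated by the antidiagonal one), and acts on the span of
  E12, E21 through the squared entries of h, i.e. by g.  Only the first two coordinates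
  mix E11 and E22, with determinant -2, so an integral "inverse" N with M N = N M = 2 I exists.\<close>

definition trace_split_mat :: "int mat" where
  "trace_split_mat = mat_of_rows_list 4 [[1,0,0,1],[1,0,0,-1],[0,1,0,0],[0,0,1,0]]"

definition trace_split_adj :: "int mat" where
  "trace_split_adj = mat_of_rows_list 4 [[1,1,0,0],[0,0,2,0],[0,0,0,2],[1,-1,0,0]]"

lemma trace_split_mat_carrier: "trace_split_mat \<in> carrier_mat 4 4"
  by (simp add: trace_split_mat_def mat_of_rows_list_def numeral_eq_Suc)

lemma trace_split_adj_carrier: "trace_split_adj \<in> carrier_mat 4 4"
  by (simp add: trace_split_adj_def mat_of_rows_list_def numeral_eq_Suc)

lemma trace_split_mat_mult_adj: "trace_split_mat * trace_split_adj = 2 \<cdot>\<^sub>m 1\<^sub>m 4"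
  by (rule eq_matI)
    (auto simp: trace_split_mat_def trace_split_adj_def mat_of_rows_list_def
      scalar_prod_def row_def col_def numeral_eq_Suc less_Suc_eq)

lemma trace_split_adj_mult_mat: "trace_split_adj * trace_split_mat = 2 \<cdot>\<^sub>m 1\<^sub>m 4"
  by (rule eq_matI)
    (auto simp: trace_split_mat_def trace_split_adj_def mat_of_rows_list_def
      scalar_prod_def row_def col_def numeral_eq_Suc less_Suc_eq)

lemma row_trace_split_mat_0: "row trace_split_mat 0 = trace_vec"
  by (rule eq_vecI)
    (auto simp: trace_split_mat_def trace_vec_def mat_of_rows_list_def vec_of_list_index
      numeral_eq_Suc less_Suc_eq)

lemma det_2x2:
  fixes A :: "'a::comm_ring_1 mat"
  assumes A: "A \<in> carrier_mat 2 2"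
  shows "det A = A $$ (0,0) * A $$ (1,1) - A $$ (0,1) * A $$ (1,0)"
proof -
  have "det A = (\<Sum>i<2. A $$ (i,0) * cofactor A i 0)"
    by (rule laplace_expansion_column[OF A]) simp
  also have "\<dots> = A $$ (0,0) * A $$ (1,1) - A $$ (0,1) * A $$ (1,0)"
    using A by (simp add: numeral_eq_Suc cofactor_def det_single mat_delete_def)
  finally show ?thesis .
qed

text \<open>The hypothesis holds on G, where x w + y z = (det h)^2 = 1 for g = q(h); it makes
  rho4 fix the identity matrix.\<close>
lemma trace_split_mat_intertwines:
  fixes x y z w :: "'r::comm_ring_1"
  assumes "x * w + y * z = 1"
  defines "g \<equiv> mat_of_rows_list 2 [[x, y], [z, w]]"
  shows "map_mat of_int trace_split_mat * rho4 g = triv_chi_rho2 g * map_mat of_int trace_split_mat"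
proof -
  have xw: "x * w = 1 - y * z"
    using assms(1) by (simp add: eq_diff_eq)
  have "det g = x * w - y * z"
    unfolding g_def by (subst det_2x2) (auto simp: mat_of_rows_list_def)
  then show ?thesis
    by (intro eq_matI)
      (auto simp: g_def trace_split_mat_def rho4_def triv_chi_rho2_def dsum_def chi_def
        rho2_def four_block_mat_def xw mat_of_rows_list_def scalar_prod_def row_def col_def
        numeral_eq_Suc less_Suc_eq)
qed

theorem proposition5p1:
  assumes two_unit: "(2::'r::comm_ring_1) dvd 1"
  shows "\<exists>(M :: int mat) (N :: int mat) (e :: nat) (f :: nat).
     M \<in> carrier_mat 4 4 \<and> N \<in> carrier_mat 4 4 \<and>
     M * N = (2 ^ f) \<cdot>\<^sub>m 1\<^sub>m 4 \<and> N * M = (2 ^ f) \<cdot>\<^sub>m 1\<^sub>m 4 \<and>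
     row M 0 = (2 ^ e) \<cdot>\<^sub>v trace_vec \<and>
     (\<forall>g \<in> (G_points :: 'r mat set).
        map_mat of_int M * rho4 g = triv_chi_rho2 g * map_mat of_int M)"
proof (rule exI[of _ trace_split_mat], rule exI[of _ trace_split_adj], rule exI[of _ 0],
    rule exI[of _ 1], intro conjI ballI)
  fix g :: "'r mat"
  assume "g \<in> G_points"
  then consider a a' :: 'r where "a * a' = 1" "g = mat_of_rows_list 2 [[a, 0], [0, a']]"
    | b b' :: 'r where "b * b' = 1" "g = mat_of_rows_list 2 [[0, b], [b', 0]]"
    unfolding G_points_def by blast
  then show "map_mat of_int trace_split_mat * rho4 g = triv_chi_rho2 g * map_mat of_int trace_split_mat"
    by cases (simp_all add: trace_split_mat_intertwines)
qed (simp_all add: trace_split_mat_carrier trace_split_adj_carrier trace_split_mat_mult_adj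
  trace_split_adj_mult_mat row_trace_split_mat_0)

end
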